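(* Let $N\ge 1$ be an integer, let $\delta>0$ be a constant, and let $m_0,m_1,\dots,m_{N-1}$ be i.i.d. real random variables whose distribution is symmetric about $0$ (i.e. their probability density or mass function $g$ is even). Let $\Phi(x)=\mathbb{E}\{e^{j2\pi m_0 x}\}$, which is real-valued by the symmetry of $g$. For real $q,p$ define the random beampattern $$\beta(q,p)=\frac{1}{N}e^{j2\pi\frac{p}{\delta}}\sum_{n=0}^{N-1}e^{j2\pi\left(n-\frac{N-1}{2}\right)q}\,e^{j2\pi m_n p},$$ and let $\beta_1(q,p)=\Re\{\beta(q,p)\}$, $\beta_2(q,p)=\Im\{\beta(q,p)\}$, $\boldsymbol{\beta}(q,p)=[\beta_1(q,p),\beta_2(q,p)]^T$. Let $S_a^N(x)=\frac{\sin(N\pi x)}{\sin(\pi x)}$ (extended by continuity where $\sin(\pi x)=0$), and $\alpha=2\pi p/\delta$. Then the random vector $\boldsymbol{\beta}(q,p)$ is asymptotically (as $N\to\infty$) jointly Gaussian distributed, and its mean and covariance matrix are $$\mathbb{E}\{\boldsymbol{\beta}(q,p)\}=\frac{1}{N}S_a^N(q)\Phi(p)\begin{bmatrix}\cos\alpha\\ \sin\alpha\end{bmatrix},$$ $$\mathbb{E}\Big\{[\boldsymbol{\beta}-\mathbb{E}\boldsymbol{\beta}][\boldsymbol{\beta}-\mathbb{E}\boldsymbol{\beta}]^T\Big\}=\begin{bmatrix}\sigma_r^2\cos^2\alpha+\sigma_i^2\sin^2\alpha&(\sigma_r^2-\sigma_i^2)\sin\alpha\cos\alpha\\(\sigma_r^2-\sigma_i^2)\sin\alpha\cos\alpha&\sigma_r^2\sin^2\alpha+\sigma_i^2\cos^2\alpha\end{bmatrix},$$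 where $$\sigma_r^2=\frac{1}{2N}\left[1-\Phi^2(p)-\frac{S_a^N(2q)}{N}\left(\Phi^2(p)-\Phi(2p)\right)\right],\qquad \sigma_i^2=\frac{1}{2N}\left[1-\Phi^2(p)+\frac{S_a^N(2q)}{N}\left(\Phi^2(p)-\Phi(2p)\right)\right].$$
   Context: This models the beampattern of a Random Frequency Diverse Array: a uniform linear array of $N$ elements where element $n$ uses carrier frequency $f_c+m_n\Delta f$ with $m_n$ random; $q$ is a scaled difference of direction sines, $p$ a scaled range difference, and $\delta=\Delta f/f_c$. The expectation is over the random vector $(m_0,\dots,m_{N-1})$. *)

theory Defs
  imports "HOL-Probability.Probability"
begin

text \<open>Dirichlet kernel S_a^N(x) = sin(N pi x)/sin(pi x), extended by continuity
  (its limit value N cos(N pi x)/cos(pi x)) where sin(pi x) = 0.\<close>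
definition SaN :: "nat \<Rightarrow> real \<Rightarrow> real" where
  "SaN N x = (if sin (pi * x) = 0 then real N * cos (real N * pi * x) / cos (pi * x)
              else sin (real N * pi * x) / sin (pi * x))"

definition beam :: "nat \<Rightarrow> real \<Rightarrow> (nat \<Rightarrow> 'a \<Rightarrow> real) \<Rightarrow> real \<Rightarrow> real \<Rightarrow> 'a \<Rightarrow> complex" where
  "beam N \<delta> m q p \<omega> =
     (1 / of_nat N) * exp (\<i> * complex_of_real (2 * pi * p / \<delta>)) *
     (\<Sum>n<N. exp (\<i> * complex_of_real (2 * pi * (real n - (real N - 1) / 2) * q)) *
             exp (\<i> * complex_of_real (2 * pi * m n \<omega> * p)))"

text \<open>Phi(x) = E exp(j 2 pi m_0 x) (complex-valued a priori).\<close>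
definition Phi :: "'a measure \<Rightarrow> (nat \<Rightarrow> 'a \<Rightarrow> real) \<Rightarrow> real \<Rightarrow> complex" where
  "Phi P m x = integral\<^sup>L P (\<lambda>\<omega>. exp (\<i> * complex_of_real (2 * pi * m 0 \<omega> * x)))"

definition sig_r2 :: "(real \<Rightarrow> real) \<Rightarrow> nat \<Rightarrow> real \<Rightarrow> real \<Rightarrow> real" where
  "sig_r2 \<Phi> N q p = 1 / (2 * real N) *
     (1 - (\<Phi> p)\<^sup>2 - SaN N (2 * q) / real N * ((\<Phi> p)\<^sup>2 - \<Phi> (2 * p)))"

definition sig_i2 :: "(real \<Rightarrow> real) \<Rightarrow> nat \<Rightarrow> real \<Rightarrow> real \<Rightarrow> real" where
  "sig_i2 \<Phi> N q p = 1 / (2 * real N) *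
     (1 - (\<Phi> p)\<^sup>2 + SaN N (2 * q) / real N * ((\<Phi> p)\<^sup>2 - \<Phi> (2 * p)))"

end

theory Submission
  imports Defs
begin

text \<open>
  Write X_n = e^{j 2 pi m_n p} and e_n = e^{j 2 pi (n - (N - 1)/2) q}, so that
  beta = (e^{j alpha} / N) sum_n e_n X_n. The symmetry of m_0 makes E X_n = Phi(p) real, and
  sum_n e_n = S_a^N(q) is a Dirichlet kernel, which gives the mean. The centred beampattern is
  (e^{j alpha} / N) sum_n e_n Y_n with Y_n = X_n - Phi(p) independent and centred, so only diagonal
  terms survive in its second moments: E |beta - E beta|^2 = (1 - Phi(p)^2) / N and
  E (beta - E beta)^2 = e^{2 j alpha} S_a^N(2q) (Phi(2p) - Phi(p)^2) / N^2; the covariance matrix of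
  the real and imaginary parts is read off from these two numbers.

  For asymptotic normality, u1 Re(beta - E beta) + u2 Im(beta - E beta) is 1/N times a sum of N
  independent centred variables bounded by 2|u|. A second-order Taylor expansion of each
  characteristic function and the telescoping estimate for products bound the distance between the
  characteristic function of sqrt N (u1 Re + u2 Im) and the Gaussian one with the same variance by
  O(N^{-1/2}).
\<close>

lemma iexp_uminus_add_iexp: "iexp (- a) + iexp a = 2 * complex_of_real (cos a)"
  by (simp add: complex_eq_iff Re_exp Im_exp)

definition dirichlet_sum :: "nat \<Rightarrow> real \<Rightarrow> complex" where
  "dirichlet_sum N y = (\<Sum>n<N. iexp ((2 * real n - real N + 1) * y))"

lemma dirichlet_sum_add_2:
  "dirichlet_sum (N + 2) y = dirichlet_sum N y + 2 * complex_of_real (cos ((real N + 1) * y))"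
proof -
  let ?g = "\<lambda>n. iexp ((2 * real n - real (N + 2) + 1) * y)"
  have "dirichlet_sum (N + 2) y = (\<Sum>n<N. ?g (Suc n)) + (?g 0 + ?g (Suc N))"
    unfolding dirichlet_sum_def add_2_eq_Suc'
    by (subst sum.lessThan_Suc_shift) (simp only: sum.lessThan_Suc ac_simps)
  also have "(\<Sum>n<N. ?g (Suc n)) = dirichlet_sum N y"
    unfolding dirichlet_sum_def
    by (intro sum.cong refl arg_cong[where f = iexp]) (simp add: algebra_simps)
  also have "?g 0 + ?g (Suc N) = 2 * complex_of_real (cos ((real N + 1) * y))"
    using iexp_uminus_add_iexp[of "(real N + 1) * y"] by (simp add: algebra_simps)
  finally show ?thesis .
qed

lemma dirichlet_sum_mult_sin: "dirichlet_sum N y * sin y = sin (real N * y)"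
proof (induction N rule: nat_induct2)
  case (step N)
  have "sin (real N * y) + 2 * cos ((real N + 1) * y) * sin y = sin (real (N + 2) * y)"
    using sin_add[of "(real N + 1) * y" y] sin_diff[of "(real N + 1) * y" y]
    by (simp add: algebra_simps)
  from arg_cong[where f = complex_of_real, OF this] show ?case
    unfolding dirichlet_sum_add_2 distrib_right step.IH by simp
qed (simp_all add: dirichlet_sum_def)

lemma dirichlet_sum_if_sin_eq_0:
  assumes "sin y = 0"
  shows "dirichlet_sum N y = real N * cos ((real N - 1) * y)"
proof (induction N rule: nat_induct2)
  case (step N)
  have "cos ((real N + 1) * y) = cos ((real N - 1) * y + 2 * y)"
    by (simp add: algebra_simps)
  also have "\<dots> = cos ((real N - 1) * y)"
    using assms sin_cos_squared_add[of y] by (simp add: cos_add sin_double cos_double)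
  finally have "real N * cos ((real N - 1) * y) + 2 * cos ((real N + 1) * y)
      = real (N + 2) * cos ((real (N + 2) - 1) * y)"
    by (simp add: algebra_simps)
  from arg_cong[where f = complex_of_real, OF this] show ?case
    unfolding dirichlet_sum_add_2 step.IH by simp
qed (simp_all add: dirichlet_sum_def)

definition steering :: "nat \<Rightarrow> real \<Rightarrow> nat \<Rightarrow> complex" where
  "steering N q n = iexp (2 * pi * (real n - (real N - 1) / 2) * q)"

lemma sum_steering_eq_SaN: "(\<Sum>n<N. steering N x n) = complex_of_real (SaN N x)"
proof -
  have "(\<Sum>n<N. steering N x n) = dirichlet_sum N (pi * x)"
    unfolding dirichlet_sum_def steering_def
    by (intro sum.cong refl arg_cong[where f = iexp]) (simp add: field_simps)
  moreover have "real N * cos (real N * pi * x) / cos (pi * x)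
      = real N * cos ((real N - 1) * (pi * x))"
    if "sin (pi * x) = 0"
  proof -
    have "cos (pi * x) \<noteq> 0"
      using that sin_cos_squared_add[of "pi * x"] by auto
    moreover have "cos (real N * pi * x) = cos ((real N - 1) * (pi * x)) * cos (pi * x)"
      using that cos_add[of "(real N - 1) * (pi * x)" "pi * x"] by (simp add: algebra_simps)
    ultimately show ?thesis by simp
  qed
  ultimately show ?thesis
    using dirichlet_sum_mult_sin[of N "pi * x"] dirichlet_sum_if_sin_eq_0[of "pi * x" N]
    by (auto simp: SaN_def field_simps mult.assoc)
qed

lemma norm_steering [simp]: "norm (steering N q n) = 1"
  by (simp add: steering_def)

lemma steering_mult_cnj: "steering N q n * cnj (steering N q n) = 1"
  by (simp add: steering_def exp_cnj exp_minus_inverse)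

lemma steering_mult_self: "steering N q n * steering N q n = steering N (2 * q) n"
proof -
  let ?a = "2 * pi * (real n - (real N - 1) / 2) * q"
  have "2 * pi * (real n - (real N - 1) / 2) * (2 * q) = ?a + ?a"
    by (simp add: field_simps)
  then show ?thesis
    unfolding steering_def by (simp only: of_real_add distrib_left mult_exp_exp)
qed

lemma integral_sum_mult_sum_orthogonal:
  fixes A B :: "nat \<Rightarrow> 'a \<Rightarrow> 'b::{real_normed_field, second_countable_topology, banach}"
  assumes integrable: "\<And>n k. n < N \<Longrightarrow> k < N \<Longrightarrow> integrable M (\<lambda>\<omega>. A n \<omega> * B k \<omega>)"
    and orthogonal: "\<And>n k. n < N \<Longrightarrow> k < N \<Longrightarrow> n \<noteq> k \<Longrightarrow> (\<integral>\<omega>. A n \<omega> * B k \<omega> \<partial>M) = 0"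
  shows "(\<integral>\<omega>. (\<Sum>n<N. a n * A n \<omega>) * (\<Sum>k<N. b k * B k \<omega>) \<partial>M)
      = (\<Sum>n<N. a n * b n * (\<integral>\<omega>. A n \<omega> * B n \<omega> \<partial>M))"
proof -
  have "(\<integral>\<omega>. (\<Sum>n<N. a n * A n \<omega>) * (\<Sum>k<N. b k * B k \<omega>) \<partial>M)
      = (\<integral>\<omega>. (\<Sum>n<N. \<Sum>k<N. a n * b k * (A n \<omega> * B k \<omega>)) \<partial>M)"
    by (simp add: sum_product mult_ac)
  also have "\<dots> = (\<Sum>n<N. \<Sum>k<N. a n * b k * (\<integral>\<omega>. A n \<omega> * B k \<omega> \<partial>M))"
    using integrable
    by (subst Bochner_Integration.integral_sum)
       (auto intro!: sum.cong Bochner_Integration.integrable_sum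
        simp: Bochner_Integration.integral_sum)
  also have "\<dots> = (\<Sum>n<N. \<Sum>k<N. if k = n then a n * b n * (\<integral>\<omega>. A n \<omega> * B n \<omega> \<partial>M) else 0)"
    using orthogonal by (intro sum.cong refl) auto
  finally show ?thesis
    by simp
qed

text \<open>If E |z|^2 = a + b and the pseudo-covariance E z^2 is e^{2 j theta} (a - b), then
  e^{-j theta} z has uncorrelated real and imaginary parts with variances a and b.\<close>
lemma integral_Re_Im_products_rotated:
  fixes z :: "'a \<Rightarrow> complex"
  assumes "integrable M (\<lambda>\<omega>. z \<omega> * cnj (z \<omega>))" and "integrable M (\<lambda>\<omega>. z \<omega> * z \<omega>)"
    and "(\<integral>\<omega>. z \<omega> * cnj (z \<omega>) \<partial>M) = complex_of_real (a + b)"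
    and "(\<integral>\<omega>. z \<omega> * z \<omega> \<partial>M) = iexp (2 * \<theta>) * complex_of_real (a - b)"
  shows "(\<integral>\<omega>. Re (z \<omega>) * Re (z \<omega>) \<partial>M) = a * (cos \<theta>)\<^sup>2 + b * (sin \<theta>)\<^sup>2"
    and "(\<integral>\<omega>. Re (z \<omega>) * Im (z \<omega>) \<partial>M) = (a - b) * sin \<theta> * cos \<theta>"
    and "(\<integral>\<omega>. Im (z \<omega>) * Re (z \<omega>) \<partial>M) = (a - b) * sin \<theta> * cos \<theta>"
    and "(\<integral>\<omega>. Im (z \<omega>) * Im (z \<omega>) \<partial>M) = a * (sin \<theta>)\<^sup>2 + b * (cos \<theta>)\<^sup>2"
proof -
  define F G where "F = (\<lambda>\<omega>. z \<omega> * cnj (z \<omega>))" and "G = (\<lambda>\<omega>. z \<omega> * z \<omega>)"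
  have pointwise: "Re (z \<omega>) * Re (z \<omega>) = (Re (F \<omega>) + Re (G \<omega>)) / 2"
    "Re (z \<omega>) * Im (z \<omega>) = Im (G \<omega>) / 2" "Im (z \<omega>) * Re (z \<omega>) = Im (G \<omega>) / 2"
    "Im (z \<omega>) * Im (z \<omega>) = (Re (F \<omega>) - Re (G \<omega>)) / 2" for \<omega>
    by (simp_all add: F_def G_def del: complex_mult_cnj)
  have "integrable M F" "integrable M G"
    using assms(1,2) by (simp_all add: F_def G_def)
  have moments: "Re (integral\<^sup>L M F) = a + b"
    "Re (integral\<^sup>L M G) = ((cos \<theta>)\<^sup>2 - (sin \<theta>)\<^sup>2) * (a - b)"
    "Im (integral\<^sup>L M G) = 2 * sin \<theta> * cos \<theta> * (a - b)"
    using assms(3,4) by (simp_all add: F_def G_def Re_exp Im_exp cos_double sin_double)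
  show "(\<integral>\<omega>. Re (z \<omega>) * Re (z \<omega>) \<partial>M) = a * (cos \<theta>)\<^sup>2 + b * (sin \<theta>)\<^sup>2"
    and "(\<integral>\<omega>. Re (z \<omega>) * Im (z \<omega>) \<partial>M) = (a - b) * sin \<theta> * cos \<theta>"
    and "(\<integral>\<omega>. Im (z \<omega>) * Re (z \<omega>) \<partial>M) = (a - b) * sin \<theta> * cos \<theta>"
    and "(\<integral>\<omega>. Im (z \<omega>) * Im (z \<omega>) \<partial>M) = a * (sin \<theta>)\<^sup>2 + b * (cos \<theta>)\<^sup>2"
    using \<open>integrable M F\<close> \<open>integrable M G\<close> unfolding pointwise
    by (simp_all add: moments sin_squared_eq field_simps)
qed

lemma integral_linear_combination_square:
  fixes f g :: "'a \<Rightarrow> real"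
  assumes "integrable M (\<lambda>\<omega>. f \<omega> * f \<omega>)" "integrable M (\<lambda>\<omega>. f \<omega> * g \<omega>)"
    "integrable M (\<lambda>\<omega>. g \<omega> * g \<omega>)"
  shows "(\<integral>\<omega>. (u * f \<omega> + v * g \<omega>)\<^sup>2 \<partial>M) = u\<^sup>2 * (\<integral>\<omega>. f \<omega> * f \<omega> \<partial>M)
      + 2 * u * v * (\<integral>\<omega>. f \<omega> * g \<omega> \<partial>M) + v\<^sup>2 * (\<integral>\<omega>. g \<omega> * g \<omega> \<partial>M)"
proof -
  have "(\<lambda>\<omega>. (u * f \<omega> + v * g \<omega>)\<^sup>2) = (\<lambda>\<omega>. u\<^sup>2 * (f \<omega> * f \<omega>)
      + 2 * u * v * (f \<omega> * g \<omega>) + v\<^sup>2 * (g \<omega> * g \<omega>))"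
    by (simp add: power2_eq_square algebra_simps)
  then show ?thesis
    using assms by simp
qed

lemma abs_exp_neg_minus_linear_le:
  fixes y :: real
  assumes "0 \<le> y"
  shows "\<bar>exp (- y) - (1 - y)\<bar> \<le> y\<^sup>2"
proof -
  have "1 - y \<le> exp (- y)"
    using exp_ge_add_one_self[of "- y"] by simp
  moreover have "exp (- y) \<le> 1 / (1 + y)"
    using assms by (simp add: exp_minus divide_inverse inverse_le_imp_le exp_ge_add_one_self)
  moreover have "1 / (1 + y) \<le> 1 - y + y\<^sup>2"
    using assms by (simp add: field_simps power2_eq_square)
  ultimately show ?thesis
    by simp
qed

lemma (in prob_space) norm_integral_le_const:
  fixes f :: "'a \<Rightarrow> 'b::{banach, second_countable_topology}"
  assumes "f \<in> borel_measurable M" and "\<And>\<omega>. norm (f \<omega>) \<le> C"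
  shows "norm (\<integral>\<omega>. f \<omega> \<partial>M) \<le> C"
proof -
  have "integrable M f"
    using assms by (intro integrable_const_bound[where B = C]) auto
  have "norm (\<integral>\<omega>. f \<omega> \<partial>M) \<le> (\<integral>\<omega>. norm (f \<omega>) \<partial>M)"
    by (rule integral_norm_bound)
  also have "\<dots> \<le> C"
    using \<open>integrable M f\<close> assms(2) by (intro integral_le_const) auto
  finally show ?thesis .
qed

lemma (in prob_space) indep_vars_integral_mult:
  fixes X :: "'i \<Rightarrow> 'a \<Rightarrow> 'b::{real_normed_field, banach, second_countable_topology}"
  assumes "indep_vars (\<lambda>_. borel) X I" "i \<in> I" "j \<in> I" "i \<noteq> j"
    and "integrable M (X i)" "integrable M (X j)"
  shows "(\<integral>\<omega>. X i \<omega> * X j \<omega> \<partial>M) = (\<integral>\<omega>. X i \<omega> \<partial>M) * (\<integral>\<omega>. X j \<omega> \<partial>M)"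
proof -
  have "indep_vars (\<lambda>_. borel) X {i, j}"
    using assms(1) by (rule indep_vars_subset) (use assms(2,3) in auto)
  then show ?thesis
    using indep_vars_lebesgue_integral[of "{i, j}" X] assms(4-6) by auto
qed

lemma (in prob_space) char_centred_bounded_taylor:
  fixes X :: "'a \<Rightarrow> real"
  assumes [measurable]: "X \<in> borel_measurable M"
    and bounded: "\<And>\<omega>. \<bar>X \<omega>\<bar> \<le> K" and centred: "expectation X = 0"
  shows "cmod (expectation (\<lambda>\<omega>. iexp (t * X \<omega>))
      - complex_of_real (1 - t\<^sup>2 * expectation (\<lambda>\<omega>. (X \<omega>)\<^sup>2) / 2))
    \<le> \<bar>t\<bar> ^ 3 * K ^ 3 / 6"
proof -
  define T where "T \<omega> = complex_of_real (1 - (t * X \<omega>)\<^sup>2 / 2) + \<i> * complex_of_real (t * X \<omega>)"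
    for \<omega>
  have "integrable M X"
    using bounded by (intro integrable_const_bound[where B = K]) auto
  moreover have "integrable M (\<lambda>\<omega>. (X \<omega>)\<^sup>2)"
    using power_mono[OF bounded abs_ge_zero, of _ 2]
    by (intro integrable_const_bound[where B = "K\<^sup>2"]) auto
  ultimately have "integrable M (\<lambda>\<omega>. 1 - (t * X \<omega>)\<^sup>2 / 2)" "integrable M (\<lambda>\<omega>. t * X \<omega>)"
    and "expectation (\<lambda>\<omega>. 1 - (t * X \<omega>)\<^sup>2 / 2) = 1 - t\<^sup>2 * expectation (\<lambda>\<omega>. (X \<omega>)\<^sup>2) / 2"
    and "expectation (\<lambda>\<omega>. t * X \<omega>) = 0"
    using centred by (simp_all add: power_mult_distrib prob_space)
  then have integrable_T: "integrable M T"
    and expectation_T: "expectation T = complex_of_real (1 - t\<^sup>2 * expectation (\<lambda>\<omega>. (X \<omega>)\<^sup>2) / 2)"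
    unfolding T_def
    by (auto simp del: of_real_diff of_real_mult of_real_power of_real_divide
        intro!: Bochner_Integration.integrable_add integrable_mult_right integrable_of_real)
  have "expectation (\<lambda>\<omega>. iexp (t * X \<omega>) - T \<omega>)
      = expectation (\<lambda>\<omega>. iexp (t * X \<omega>))
        - complex_of_real (1 - t\<^sup>2 * expectation (\<lambda>\<omega>. (X \<omega>)\<^sup>2) / 2)"
    unfolding expectation_T[symmetric]
    by (rule Bochner_Integration.integral_diff[OF _ integrable_T])
       (auto intro: integrable_const_bound)
  moreover have "cmod (iexp (t * X \<omega>) - T \<omega>) \<le> \<bar>t\<bar> ^ 3 * K ^ 3 / 6" for \<omega>
  proof -
    have "T \<omega> = (\<Sum>k\<le>2. (\<i> * complex_of_real (t * X \<omega>)) ^ k / fact k)"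
      by (simp add: T_def eval_nat_numeral field_simps)
    then have "cmod (iexp (t * X \<omega>) - T \<omega>) \<le> \<bar>t * X \<omega>\<bar> ^ 3 / 6"
      using iexp_approx1[of "t * X \<omega>" 2] by (simp add: eval_nat_numeral)
    also have "\<dots> \<le> \<bar>t\<bar> ^ 3 * K ^ 3 / 6"
      using power_mono[OF bounded abs_ge_zero, of \<omega> 3]
      by (simp add: abs_mult power_mult_distrib mult_left_mono)
    finally show ?thesis .
  qed
  then have "cmod (expectation (\<lambda>\<omega>. iexp (t * X \<omega>) - T \<omega>)) \<le> \<bar>t\<bar> ^ 3 * K ^ 3 / 6"
    by (intro norm_integral_le_const) (auto simp: T_def)
  ultimately show ?thesis
    by simp
qed

lemma (in prob_space) char_centred_bounded_approx:
  fixes X :: "'a \<Rightarrow> real"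
  assumes [measurable]: "X \<in> borel_measurable M"
    and bounded: "\<And>\<omega>. \<bar>X \<omega>\<bar> \<le> K" and centred: "expectation X = 0"
  shows "cmod (expectation (\<lambda>\<omega>. iexp (t * X \<omega>))
      - complex_of_real (exp (- (t\<^sup>2 * expectation (\<lambda>\<omega>. (X \<omega>)\<^sup>2) / 2))))
    \<le> \<bar>t\<bar> ^ 3 * K ^ 3 / 6 + (t\<^sup>2 * K\<^sup>2 / 2)\<^sup>2"
proof -
  define y where "y = t\<^sup>2 * expectation (\<lambda>\<omega>. (X \<omega>)\<^sup>2) / 2"
  have square_bounded: "(X \<omega>)\<^sup>2 \<le> K\<^sup>2" for \<omega>
    using power_mono[OF bounded abs_ge_zero, of \<omega> 2] by simp
  then have "0 \<le> y" "y \<le> t\<^sup>2 * K\<^sup>2 / 2"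
    using integral_le_const[of "\<lambda>\<omega>. (X \<omega>)\<^sup>2" "K\<^sup>2"]
    by (auto simp: y_def integrable_const_bound[where B = "K\<^sup>2"]
        intro!: divide_right_mono mult_left_mono)
  then have "\<bar>exp (- y) - (1 - y)\<bar> \<le> (t\<^sup>2 * K\<^sup>2 / 2)\<^sup>2"
    using abs_exp_neg_minus_linear_le[of y] power_mono[of y "t\<^sup>2 * K\<^sup>2 / 2" 2] by linarith
  then have "cmod (complex_of_real (1 - y) - complex_of_real (exp (- y))) \<le> (t\<^sup>2 * K\<^sup>2 / 2)\<^sup>2"
    by (simp add: abs_minus_commute flip: of_real_diff)
  with char_centred_bounded_taylor[OF assms, of t]
  have "cmod (expectation (\<lambda>\<omega>. iexp (t * X \<omega>)) - complex_of_real (exp (- y)))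
      \<le> \<bar>t\<bar> ^ 3 * K ^ 3 / 6 + (t\<^sup>2 * K\<^sup>2 / 2)\<^sup>2"
    unfolding y_def[symmetric] by (rule norm_diff_triangle_le)
  then show ?thesis
    by (simp add: y_def)
qed

lemma (in prob_space) expectation_square_sum_indep_centred:
  fixes X :: "nat \<Rightarrow> 'a \<Rightarrow> real"
  assumes indep: "indep_vars (\<lambda>_. borel) X {..<N}"
    and bounded: "\<And>n \<omega>. n < N \<Longrightarrow> \<bar>X n \<omega>\<bar> \<le> K"
    and centred: "\<And>n. n < N \<Longrightarrow> expectation (X n) = 0"
  shows "expectation (\<lambda>\<omega>. (\<Sum>n<N. X n \<omega>)\<^sup>2) = (\<Sum>n<N. expectation (\<lambda>\<omega>. (X n \<omega>)\<^sup>2))"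
proof -
  have measurable: "X n \<in> borel_measurable M" if "n < N" for n
    using indep that by (auto simp: indep_vars_def)
  have integrable: "integrable M (X n)" if "n < N" for n
    using measurable bounded that by (auto intro!: integrable_const_bound[where B = K])
  have integrable_mult: "integrable M (\<lambda>\<omega>. X n \<omega> * X k \<omega>)" if "n < N" "k < N" for n k
  proof (rule integrable_const_bound[where B = "K * K"])
    show "AE \<omega> in M. norm (X n \<omega> * X k \<omega>) \<le> K * K"
      using bounded[OF that(1)] bounded[OF that(2)]
      by (auto simp: abs_mult intro!: mult_mono order_trans[OF abs_ge_zero])
  qed (use measurable that in auto)
  show ?thesis
    using integral_sum_mult_sum_orthogonal[where A = X and B = X and M = M and N = N
        and a = "\<lambda>_. 1" and b = "\<lambda>_. 1"]
      integrable_mult indep_vars_integral_mult[OF indep] integrable centred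
    by (simp add: power2_eq_square)
qed

lemma (in prob_space) char_indep_sum_approx:
  fixes X :: "nat \<Rightarrow> 'a \<Rightarrow> real"
  assumes indep: "indep_vars (\<lambda>_. borel) X {..<N}"
    and bounded: "\<And>n \<omega>. n < N \<Longrightarrow> \<bar>X n \<omega>\<bar> \<le> K"
    and centred: "\<And>n. n < N \<Longrightarrow> expectation (X n) = 0"
  shows "cmod (expectation (\<lambda>\<omega>. iexp (t * (\<Sum>n<N. X n \<omega>)))
      - complex_of_real (exp (- (t\<^sup>2 * expectation (\<lambda>\<omega>. (\<Sum>n<N. X n \<omega>)\<^sup>2) / 2))))
    \<le> real N * (\<bar>t\<bar> ^ 3 * K ^ 3 / 6 + (t\<^sup>2 * K\<^sup>2 / 2)\<^sup>2)"
proof -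
  have measurable: "X n \<in> borel_measurable M" if "n < N" for n
    using indep that by (auto simp: indep_vars_def)
  have variance: "expectation (\<lambda>\<omega>. (\<Sum>n<N. X n \<omega>)\<^sup>2) = (\<Sum>n<N. expectation (\<lambda>\<omega>. (X n \<omega>)\<^sup>2))"
    by (rule expectation_square_sum_indep_centred[OF indep bounded centred])
  have "expectation (\<lambda>\<omega>. iexp (t * (\<Sum>n<N. X n \<omega>))) = expectation (\<lambda>\<omega>. \<Prod>n<N. iexp (t * X n \<omega>))"
    by (simp add: sum_distrib_left exp_sum)
  also have "\<dots> = (\<Prod>n<N. expectation (\<lambda>\<omega>. iexp (t * X n \<omega>)))"
    by (intro indep_vars_lebesgue_integral indep_vars_compose2[OF indep]
        integrable_const_bound[where B = 1] measurable_compose[OF measurable]) auto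
  finally have char: "expectation (\<lambda>\<omega>. iexp (t * (\<Sum>n<N. X n \<omega>)))
      = (\<Prod>n<N. expectation (\<lambda>\<omega>. iexp (t * X n \<omega>)))" .
  have gauss: "exp (- (t\<^sup>2 * (\<Sum>n<N. expectation (\<lambda>\<omega>. (X n \<omega>)\<^sup>2)) / 2))
      = (\<Prod>n<N. exp (- (t\<^sup>2 * expectation (\<lambda>\<omega>. (X n \<omega>)\<^sup>2) / 2)))"
    by (simp add: exp_sum[symmetric] sum_distrib_left sum_divide_distrib sum_negf)
  have "cmod ((\<Prod>n<N. expectation (\<lambda>\<omega>. iexp (t * X n \<omega>)))
      - (\<Prod>n<N. complex_of_real (exp (- (t\<^sup>2 * expectation (\<lambda>\<omega>. (X n \<omega>)\<^sup>2) / 2)))))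
    \<le> (\<Sum>n<N. cmod (expectation (\<lambda>\<omega>. iexp (t * X n \<omega>))
      - complex_of_real (exp (- (t\<^sup>2 * expectation (\<lambda>\<omega>. (X n \<omega>)\<^sup>2) / 2)))))"
    by (rule norm_prod_diff) (auto intro!: norm_integral_le_const measurable_compose[OF measurable])
  also have "\<dots> \<le> (\<Sum>n<N. \<bar>t\<bar> ^ 3 * K ^ 3 / 6 + (t\<^sup>2 * K\<^sup>2 / 2)\<^sup>2)"
    by (intro sum_mono char_centred_bounded_approx measurable bounded centred) auto
  also have "\<dots> = real N * (\<bar>t\<bar> ^ 3 * K ^ 3 / 6 + (t\<^sup>2 * K\<^sup>2 / 2)\<^sup>2)"
    by simp
  finally show ?thesis
    unfolding char variance gauss of_real_prod .
qed

lemma tendsto_char_approx_bound: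
  "(\<lambda>N. real N * (\<bar>1 / sqrt (real N)\<bar> ^ 3 * K ^ 3 / 6 + ((1 / sqrt (real N))\<^sup>2 * K\<^sup>2 / 2)\<^sup>2))
    \<longlonglongrightarrow> 0"
proof (rule Lim_transform_eventually)
  show "(\<lambda>N. K ^ 3 / 6 * sqrt (1 / real N) + (K\<^sup>2 / 2)\<^sup>2 * (1 / real N)) \<longlonglongrightarrow> 0"
    by (intro tendsto_add_zero tendsto_mult_right_zero lim_inverse_n'
        tendsto_real_sqrt[OF lim_inverse_n', unfolded real_sqrt_zero])
  show "\<forall>\<^sub>F N in sequentially. K ^ 3 / 6 * sqrt (1 / real N) + (K\<^sup>2 / 2)\<^sup>2 * (1 / real N)
      = real N * (\<bar>1 / sqrt (real N)\<bar> ^ 3 * K ^ 3 / 6 + ((1 / sqrt (real N))\<^sup>2 * K\<^sup>2 / 2)\<^sup>2)"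
  proof (rule eventually_sequentiallyI[of 1])
    fix N :: nat
    assume "1 \<le> N"
    have "real N * (\<bar>t\<bar> ^ 3 * K ^ 3 / 6 + (t\<^sup>2 * K\<^sup>2 / 2)\<^sup>2)
        = K ^ 3 / 6 * (real N * t ^ 3) + (K\<^sup>2 / 2)\<^sup>2 * (real N * (t\<^sup>2)\<^sup>2)" if "0 \<le> t" for t
      using that by (simp add: power2_eq_square power3_eq_cube field_simps)
    moreover have "real N * (1 / sqrt (real N)) ^ 3 = sqrt (1 / real N)"
      using \<open>1 \<le> N\<close> by (simp add: power3_eq_cube real_sqrt_divide field_simps)
    moreover have "real N * ((1 / sqrt (real N))\<^sup>2)\<^sup>2 = 1 / real N"
      using \<open>1 \<le> N\<close> by (simp add: power2_eq_square field_simps)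
    ultimately show "K ^ 3 / 6 * sqrt (1 / real N) + (K\<^sup>2 / 2)\<^sup>2 * (1 / real N)
      = real N * (\<bar>1 / sqrt (real N)\<bar> ^ 3 * K ^ 3 / 6 + ((1 / sqrt (real N))\<^sup>2 * K\<^sup>2 / 2)\<^sup>2)"
      by simp
  qed
qed

lemma sig_r2_add_sig_i2: "sig_r2 \<Phi> N q p + sig_i2 \<Phi> N q p = (1 - (\<Phi> p)\<^sup>2) / real N"
  by (cases "N = 0") (simp_all add: sig_r2_def sig_i2_def field_simps)

lemma sig_r2_diff_sig_i2:
  "sig_r2 \<Phi> N q p - sig_i2 \<Phi> N q p = SaN N (2 * q) * (\<Phi> (2 * p) - (\<Phi> p)\<^sup>2) / (real N)\<^sup>2"
  by (cases "N = 0") (simp_all add: sig_r2_def sig_i2_def field_simps power2_eq_square)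

lemma borel_measurable_cnj [measurable]: "cnj \<in> borel_measurable borel"
  by (intro borel_measurable_continuous_onI continuous_intros)

locale rfda = prob_space P for P :: "'a measure" +
  fixes m :: "nat \<Rightarrow> 'a \<Rightarrow> real"
  assumes measurable_m [measurable]: "\<And>n. m n \<in> borel_measurable P"
    and indep_m: "indep_vars (\<lambda>_. borel) m UNIV"
    and distr_m: "\<And>n. distr P borel (m n) = distr P borel (m 0)"
    and distr_uminus_m0: "distr P borel (\<lambda>\<omega>. - m 0 \<omega>) = distr P borel (m 0)"
begin

lemma integral_comp_m:
  fixes f :: "real \<Rightarrow> 'b::{banach, second_countable_topology}"
  assumes [measurable]: "f \<in> borel_measurable borel"
  shows "(\<integral>\<omega>. f (m n \<omega>) \<partial>P) = (\<integral>\<omega>. f (m 0 \<omega>) \<partial>P)"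
  using integral_distr[of "m n" P borel f] integral_distr[of "m 0" P borel f]
  by (simp add: distr_m[of n])

lemma integral_comp_uminus_m0:
  fixes f :: "real \<Rightarrow> 'b::{banach, second_countable_topology}"
  assumes [measurable]: "f \<in> borel_measurable borel"
  shows "(\<integral>\<omega>. f (- m 0 \<omega>) \<partial>P) = (\<integral>\<omega>. f (m 0 \<omega>) \<partial>P)"
  using integral_distr[of "\<lambda>\<omega>. - m 0 \<omega>" P borel f] integral_distr[of "m 0" P borel f]
  by (simp add: distr_uminus_m0)

lemma integral_mult_indep_m:
  fixes f g :: "real \<Rightarrow> 'b::{real_normed_field, banach, second_countable_topology}"
  assumes "n \<noteq> k" and [measurable]: "f \<in> borel_measurable borel" "g \<in> borel_measurable borel"
    and "\<And>y. norm (f y) \<le> B" "\<And>y. norm (g y) \<le> B"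
  shows "(\<integral>\<omega>. f (m n \<omega>) * g (m k \<omega>) \<partial>P) = (\<integral>\<omega>. f (m n \<omega>) \<partial>P) * (\<integral>\<omega>. g (m k \<omega>) \<partial>P)"
proof -
  define h where "h i = (if i = n then f else g)" for i
  have "indep_vars (\<lambda>_. borel) (\<lambda>i \<omega>. h i (m i \<omega>)) UNIV"
    using indep_m by (rule indep_vars_compose2) (simp add: h_def)
  moreover have "integrable P (\<lambda>\<omega>. f (m n \<omega>))" "integrable P (\<lambda>\<omega>. g (m k \<omega>))"
    using assms by (auto intro!: integrable_const_bound[where B = B])
  ultimately show ?thesis
    using indep_vars_integral_mult[of "\<lambda>i \<omega>. h i (m i \<omega>)" UNIV n k] \<open>n \<noteq> k\<close>
    by (simp add: h_def)
qed

definition phi :: "real \<Rightarrow> real" where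
  "phi x = Re (Phi P m x)"

lemma cnj_Phi: "cnj (Phi P m x) = Phi P m x"
proof -
  have "cnj (Phi P m x) = (\<integral>\<omega>. iexp (2 * pi * (- m 0 \<omega>) * x) \<partial>P)"
    unfolding Phi_def by (simp flip: Bochner_Integration.integral_cnj add: exp_cnj)
  also have "\<dots> = Phi P m x"
    unfolding Phi_def by (rule integral_comp_uminus_m0[where f = "\<lambda>y. iexp (2 * pi * y * x)"]) simp
  finally show ?thesis .
qed

lemma Im_Phi: "Im (Phi P m x) = 0"
  using cnj_Phi[of x] by (simp add: complex_eq_iff)

lemma Phi_eq_phi: "Phi P m x = complex_of_real (phi x)"
  using Im_Phi[of x] by (simp add: phi_def complex_eq_iff)

lemma integral_iexp_m: "(\<integral>\<omega>. iexp (2 * pi * m n \<omega> * x) \<partial>P) = complex_of_real (phi x)"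
  using integral_comp_m[where f = "\<lambda>y. iexp (2 * pi * y * x)" and n = n] Phi_eq_phi[of x]
  by (simp add: Phi_def)

lemma abs_phi_le_1: "\<bar>phi x\<bar> \<le> 1"
proof -
  have "cmod (\<integral>\<omega>. iexp (2 * pi * m 0 \<omega> * x) \<partial>P) \<le> 1"
    by (rule norm_integral_le_const) auto
  then show ?thesis
    unfolding integral_iexp_m by simp
qed

definition centred_phasor :: "real \<Rightarrow> real \<Rightarrow> complex" where
  "centred_phasor p y = iexp (2 * pi * y * p) - complex_of_real (phi p)"

lemma measurable_centred_phasor [measurable]: "centred_phasor p \<in> borel_measurable borel"
  unfolding centred_phasor_def by measurable

lemma norm_centred_phasor_le: "norm (centred_phasor p y) \<le> 2"
  using norm_triangle_ineq4[of "iexp (2 * pi * y * p)" "complex_of_real (phi p)"] abs_phi_le_1[of p]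
  by (simp add: centred_phasor_def)

lemma integrable_centred_phasor_mult:
  assumes [measurable]: "g \<in> borel_measurable borel" and "\<And>y. norm (g y) \<le> 2"
  shows "integrable P (\<lambda>\<omega>. centred_phasor p (m n \<omega>) * g (m k \<omega>))"
proof (rule integrable_const_bound[where B = 4])
  show "AE \<omega> in P. norm (centred_phasor p (m n \<omega>) * g (m k \<omega>)) \<le> 4"
    using mult_mono[OF norm_centred_phasor_le assms(2)] by (simp add: norm_mult)
qed simp

lemma integral_centred_phasor: "(\<integral>\<omega>. centred_phasor p (m n \<omega>) \<partial>P) = 0"
proof -
  have "(\<integral>\<omega>. centred_phasor p (m n \<omega>) \<partial>P)
      = (\<integral>\<omega>. iexp (2 * pi * m n \<omega> * p) \<partial>P) - complex_of_real (phi p)"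
    unfolding centred_phasor_def
    by (subst Bochner_Integration.integral_diff)
       (auto intro: integrable_const_bound simp: prob_space)
  then show ?thesis
    by (simp only: integral_iexp_m) simp
qed

lemma integral_centred_phasor_mult_indep:
  assumes "n \<noteq> k" and [measurable]: "g \<in> borel_measurable borel" and "\<And>y. norm (g y) \<le> 2"
  shows "(\<integral>\<omega>. centred_phasor p (m n \<omega>) * g (m k \<omega>) \<partial>P) = 0"
  using integral_mult_indep_m[OF assms(1) measurable_centred_phasor assms(2)
      norm_centred_phasor_le assms(3)]
  by (simp add: integral_centred_phasor)

lemma integral_centred_phasor_mult_cnj:
  "(\<integral>\<omega>. centred_phasor p (m n \<omega>) * cnj (centred_phasor p (m n \<omega>)) \<partial>P)
    = complex_of_real (1 - (phi p)\<^sup>2)"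
proof -
  let ?X = "\<lambda>\<omega>. iexp (2 * pi * m n \<omega> * p)" and ?c = "complex_of_real (phi p)"
  have "?X \<omega> * cnj (?X \<omega>) = 1" for \<omega>
    by (simp add: exp_cnj exp_minus_inverse)
  then have "centred_phasor p (m n \<omega>) * cnj (centred_phasor p (m n \<omega>))
      = (1 + ?c * ?c) - (?c * ?X \<omega> + ?c * cnj (?X \<omega>))" for \<omega>
    by (simp add: centred_phasor_def algebra_simps)
  moreover have "integrable P ?X" "integrable P (\<lambda>\<omega>. cnj (?X \<omega>))"
    by (auto intro: integrable_const_bound)
  ultimately show ?thesis
    using integral_iexp_m[of n p]
    by (simp add: prob_space Bochner_Integration.integral_cnj power2_eq_square)
qed

lemma integral_centred_phasor_sq:
  "(\<integral>\<omega>. centred_phasor p (m n \<omega>) * centred_phasor p (m n \<omega>) \<partial>P)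
    = complex_of_real (phi (2 * p) - (phi p)\<^sup>2)"
proof -
  let ?X = "\<lambda>\<omega>. iexp (2 * pi * m n \<omega> * p)" and ?X2 = "\<lambda>\<omega>. iexp (2 * pi * m n \<omega> * (2 * p))"
    and ?c = "complex_of_real (phi p)"
  have "?X \<omega> * ?X \<omega> = ?X2 \<omega>" for \<omega>
    by (simp add: exp_add[symmetric] algebra_simps)
  then have "centred_phasor p (m n \<omega>) * centred_phasor p (m n \<omega>)
      = (?X2 \<omega> + ?c * ?c) - 2 * ?c * ?X \<omega>" for \<omega>
    by (simp add: centred_phasor_def algebra_simps power2_eq_square)
  moreover have "integrable P ?X" "integrable P ?X2"
    by (auto intro: integrable_const_bound)
  ultimately show ?thesis
    using integral_iexp_m[of n p] integral_iexp_m[of n "2 * p"]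
    by (simp add: prob_space power2_eq_square)
qed

lemma beam_eq:
  "beam N \<delta> m q p \<omega>
    = iexp (2 * pi * p / \<delta>) / of_nat N * (\<Sum>n<N. steering N q n * iexp (2 * pi * m n \<omega> * p))"
  by (simp add: beam_def steering_def)

lemma measurable_beam [measurable]: "beam N \<delta> m q p \<in> borel_measurable P"
  unfolding beam_def by measurable

lemma norm_beam_le: "norm (beam N \<delta> m q p \<omega>) \<le> 1"
proof -
  have "norm (\<Sum>n<N. steering N q n * iexp (2 * pi * m n \<omega> * p)) \<le> real N"
    using norm_sum[of "\<lambda>n. steering N q n * iexp (2 * pi * m n \<omega> * p)" "{..<N}"]
    by (simp add: norm_mult)
  then show ?thesis
    by (cases "N = 0") (auto simp: beam_eq norm_mult norm_divide field_simps)
qed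

lemma integrable_beam: "integrable P (beam N \<delta> m q p)"
  using norm_beam_le by (intro integrable_const_bound[where B = 1]) auto

lemma integral_beam:
  "(\<integral>\<omega>. beam N \<delta> m q p \<omega> \<partial>P) = iexp (2 * pi * p / \<delta>) / of_nat N * complex_of_real (SaN N q * phi p)"
proof -
  have "(\<integral>\<omega>. (\<Sum>n<N. steering N q n * iexp (2 * pi * m n \<omega> * p)) \<partial>P)
      = (\<Sum>n<N. steering N q n * (\<integral>\<omega>. iexp (2 * pi * m n \<omega> * p) \<partial>P))"
    by (subst Bochner_Integration.integral_sum)
       (auto intro!: integrable_mult_right integrable_const_bound[where B = 1])
  also have "\<dots> = complex_of_real (SaN N q * phi p)"
    by (simp only: integral_iexp_m flip: sum_distrib_right) (simp add: sum_steering_eq_SaN)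
  finally show ?thesis
    unfolding beam_eq by simp
qed

definition centred_beam :: "nat \<Rightarrow> real \<Rightarrow> real \<Rightarrow> real \<Rightarrow> 'a \<Rightarrow> complex" where
  "centred_beam N \<delta> q p \<omega> = beam N \<delta> m q p \<omega> - (\<integral>\<omega>. beam N \<delta> m q p \<omega> \<partial>P)"

lemma centred_beam_eq:
  "centred_beam N \<delta> q p \<omega>
    = iexp (2 * pi * p / \<delta>) / of_nat N * (\<Sum>n<N. steering N q n * centred_phasor p (m n \<omega>))"
proof -
  have "(\<Sum>n<N. steering N q n * centred_phasor p (m n \<omega>))
      = (\<Sum>n<N. steering N q n * iexp (2 * pi * m n \<omega> * p)) - complex_of_real (SaN N q * phi p)"
    by (simp add: centred_phasor_def right_diff_distrib sum_subtractf
        flip: sum_distrib_right sum_steering_eq_SaN)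
  then show ?thesis
    unfolding centred_beam_def integral_beam beam_eq by (simp add: right_diff_distrib)
qed

lemma measurable_centred_beam [measurable]: "centred_beam N \<delta> q p \<in> borel_measurable P"
  unfolding centred_beam_def by measurable

lemma Re_centred_beam:
  "Re (centred_beam N \<delta> q p \<omega>) = Re (beam N \<delta> m q p \<omega>) - (\<integral>\<omega>. Re (beam N \<delta> m q p \<omega>) \<partial>P)"
  using integrable_beam by (simp add: centred_beam_def)

lemma Im_centred_beam:
  "Im (centred_beam N \<delta> q p \<omega>) = Im (beam N \<delta> m q p \<omega>) - (\<integral>\<omega>. Im (beam N \<delta> m q p \<omega>) \<partial>P)"
  using integrable_beam by (simp add: centred_beam_def)

lemma integral_Re_beam:
  "(\<integral>\<omega>. Re (beam N \<delta> m q p \<omega>) \<partial>P) = 1 / real N * SaN N q * phi p * cos (2 * pi * p / \<delta>)"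
  using integrable_beam by (simp add: integral_beam Re_exp Im_exp)

lemma integral_Im_beam:
  "(\<integral>\<omega>. Im (beam N \<delta> m q p \<omega>) \<partial>P) = 1 / real N * SaN N q * phi p * sin (2 * pi * p / \<delta>)"
  using integrable_beam by (simp add: integral_beam Re_exp Im_exp)

lemma norm_centred_beam_le: "norm (centred_beam N \<delta> q p \<omega>) \<le> 2"
proof -
  have "norm (\<integral>\<omega>. beam N \<delta> m q p \<omega> \<partial>P) \<le> 1"
    using norm_beam_le by (intro norm_integral_le_const) auto
  then show ?thesis
    using norm_triangle_ineq4[of "beam N \<delta> m q p \<omega>" "\<integral>\<omega>. beam N \<delta> m q p \<omega> \<partial>P"]
      norm_beam_le[of N \<delta> q p \<omega>]
    unfolding centred_beam_def by linarith
qed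

lemma integrable_centred_beam_products:
  "integrable P (\<lambda>\<omega>. centred_beam N \<delta> q p \<omega> * cnj (centred_beam N \<delta> q p \<omega>))"
  "integrable P (\<lambda>\<omega>. centred_beam N \<delta> q p \<omega> * centred_beam N \<delta> q p \<omega>)"
  "integrable P (\<lambda>\<omega>. Re (centred_beam N \<delta> q p \<omega>) * Re (centred_beam N \<delta> q p \<omega>))"
  "integrable P (\<lambda>\<omega>. Re (centred_beam N \<delta> q p \<omega>) * Im (centred_beam N \<delta> q p \<omega>))"
  "integrable P (\<lambda>\<omega>. Im (centred_beam N \<delta> q p \<omega>) * Im (centred_beam N \<delta> q p \<omega>))"
proof -
  have bounds: "norm (centred_beam N \<delta> q p \<omega>) \<le> 2" "\<bar>Re (centred_beam N \<delta> q p \<omega>)\<bar> \<le> 2"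
    "\<bar>Im (centred_beam N \<delta> q p \<omega>)\<bar> \<le> 2" for \<omega>
    using norm_centred_beam_le abs_Re_le_cmod abs_Im_le_cmod order_trans by blast+
  have product_bound: "norm (x * y) \<le> 4" if "norm x \<le> 2" "norm y \<le> 2"
    for x y :: "'c::real_normed_div_algebra"
    using mult_mono[OF that] by (simp add: norm_mult)
  show "integrable P (\<lambda>\<omega>. centred_beam N \<delta> q p \<omega> * cnj (centred_beam N \<delta> q p \<omega>))"
    "integrable P (\<lambda>\<omega>. centred_beam N \<delta> q p \<omega> * centred_beam N \<delta> q p \<omega>)"
    "integrable P (\<lambda>\<omega>. Re (centred_beam N \<delta> q p \<omega>) * Re (centred_beam N \<delta> q p \<omega>))"
    "integrable P (\<lambda>\<omega>. Re (centred_beam N \<delta> q p \<omega>) * Im (centred_beam N \<delta> q p \<omega>))"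
    "integrable P (\<lambda>\<omega>. Im (centred_beam N \<delta> q p \<omega>) * Im (centred_beam N \<delta> q p \<omega>))"
    by (intro integrable_const_bound[where B = 4] AE_I2 product_bound; simp add: bounds)+
qed

lemma integral_centred_beam_mult_cnj:
  "(\<integral>\<omega>. centred_beam N \<delta> q p \<omega> * cnj (centred_beam N \<delta> q p \<omega>) \<partial>P)
    = complex_of_real ((1 - (phi p)\<^sup>2) / real N)"
proof -
  let ?c = "iexp (2 * pi * p / \<delta>) / of_nat N"
  have "(\<integral>\<omega>. centred_beam N \<delta> q p \<omega> * cnj (centred_beam N \<delta> q p \<omega>) \<partial>P)
      = ?c * cnj ?c * (\<integral>\<omega>. (\<Sum>n<N. steering N q n * centred_phasor p (m n \<omega>))
          * (\<Sum>k<N. cnj (steering N q k) * cnj (centred_phasor p (m k \<omega>))) \<partial>P)"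
    by (simp add: centred_beam_eq mult_ac)
  also have "\<dots> = ?c * cnj ?c * (\<Sum>n<N. steering N q n * cnj (steering N q n)
      * (\<integral>\<omega>. centred_phasor p (m n \<omega>) * cnj (centred_phasor p (m n \<omega>)) \<partial>P))"
    by (subst integral_sum_mult_sum_orthogonal)
       (auto intro!: integrable_centred_phasor_mult integral_centred_phasor_mult_indep
        simp: norm_centred_phasor_le)
  also have "\<dots> = complex_of_real ((1 - (phi p)\<^sup>2) / real N)"
    by (cases "N = 0")
       (simp_all add: steering_mult_cnj integral_centred_phasor_mult_cnj exp_cnj exp_minus_inverse
        power2_eq_square field_simps)
  finally show ?thesis .
qed

lemma integral_centred_beam_sq:
  "(\<integral>\<omega>. centred_beam N \<delta> q p \<omega> * centred_beam N \<delta> q p \<omega> \<partial>P)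
    = iexp (2 * (2 * pi * p / \<delta>))
      * complex_of_real (SaN N (2 * q) * (phi (2 * p) - (phi p)\<^sup>2) / (real N)\<^sup>2)"
proof -
  let ?c = "iexp (2 * pi * p / \<delta>) / of_nat N"
  have "(\<integral>\<omega>. centred_beam N \<delta> q p \<omega> * centred_beam N \<delta> q p \<omega> \<partial>P)
      = ?c * ?c * (\<integral>\<omega>. (\<Sum>n<N. steering N q n * centred_phasor p (m n \<omega>))
          * (\<Sum>k<N. steering N q k * centred_phasor p (m k \<omega>)) \<partial>P)"
    by (simp add: centred_beam_eq mult_ac)
  also have "\<dots> = ?c * ?c * (\<Sum>n<N. steering N q n * steering N q n
      * (\<integral>\<omega>. centred_phasor p (m n \<omega>) * centred_phasor p (m n \<omega>) \<partial>P))"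
    by (subst integral_sum_mult_sum_orthogonal)
       (auto intro!: integrable_centred_phasor_mult integral_centred_phasor_mult_indep
        simp: norm_centred_phasor_le)
  also have "\<dots> = ?c * ?c * complex_of_real (SaN N (2 * q) * (phi (2 * p) - (phi p)\<^sup>2))"
    by (simp add: steering_mult_self integral_centred_phasor_sq sum_steering_eq_SaN
        flip: sum_distrib_right)
  also have "\<dots> = iexp (2 * (2 * pi * p / \<delta>))
      * complex_of_real (SaN N (2 * q) * (phi (2 * p) - (phi p)\<^sup>2) / (real N)\<^sup>2)"
    by (simp add: exp_add[symmetric] power2_eq_square field_simps)
  finally show ?thesis .
qed

lemma covariance_centred_beam:
  "(\<integral>\<omega>. Re (centred_beam N \<delta> q p \<omega>) * Re (centred_beam N \<delta> q p \<omega>) \<partial>P)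
    = sig_r2 phi N q p * (cos (2 * pi * p / \<delta>))\<^sup>2 + sig_i2 phi N q p * (sin (2 * pi * p / \<delta>))\<^sup>2"
  "(\<integral>\<omega>. Re (centred_beam N \<delta> q p \<omega>) * Im (centred_beam N \<delta> q p \<omega>) \<partial>P)
    = (sig_r2 phi N q p - sig_i2 phi N q p) * sin (2 * pi * p / \<delta>) * cos (2 * pi * p / \<delta>)"
  "(\<integral>\<omega>. Im (centred_beam N \<delta> q p \<omega>) * Re (centred_beam N \<delta> q p \<omega>) \<partial>P)
    = (sig_r2 phi N q p - sig_i2 phi N q p) * sin (2 * pi * p / \<delta>) * cos (2 * pi * p / \<delta>)"
  "(\<integral>\<omega>. Im (centred_beam N \<delta> q p \<omega>) * Im (centred_beam N \<delta> q p \<omega>) \<partial>P)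
    = sig_r2 phi N q p * (sin (2 * pi * p / \<delta>))\<^sup>2 + sig_i2 phi N q p * (cos (2 * pi * p / \<delta>))\<^sup>2"
  by (rule integral_Re_Im_products_rotated[OF integrable_centred_beam_products(1,2)
        integral_centred_beam_mult_cnj[of N \<delta> q p, folded sig_r2_add_sig_i2[of phi N q p]]
        integral_centred_beam_sq[of N \<delta> q p, folded sig_r2_diff_sig_i2[of phi N q p]]])+

lemma variance_linear_combination_centred_beam:
  "(\<integral>\<omega>. (u1 * Re (centred_beam N \<delta> q p \<omega>) + u2 * Im (centred_beam N \<delta> q p \<omega>))\<^sup>2 \<partial>P)
    = u1\<^sup>2 * (sig_r2 phi N q p * (cos (2 * pi * p / \<delta>))\<^sup>2
        + sig_i2 phi N q p * (sin (2 * pi * p / \<delta>))\<^sup>2)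
      + 2 * u1 * u2 * ((sig_r2 phi N q p - sig_i2 phi N q p)
        * sin (2 * pi * p / \<delta>) * cos (2 * pi * p / \<delta>))
      + u2\<^sup>2 * (sig_r2 phi N q p * (sin (2 * pi * p / \<delta>))\<^sup>2
        + sig_i2 phi N q p * (cos (2 * pi * p / \<delta>))\<^sup>2)"
  unfolding integral_linear_combination_square[OF integrable_centred_beam_products(3-5)]
    covariance_centred_beam ..

lemma Re_cnj_mult_centred_beam:
  "Re (cnj u * centred_beam N \<delta> q p \<omega>)
    = (\<Sum>n<N. Re (cnj u * iexp (2 * pi * p / \<delta>) * steering N q n * centred_phasor p (m n \<omega>)))
      / real N"
  by (simp add: centred_beam_eq sum_distrib_left Re_sum sum_divide_distrib mult_ac)

lemma char_centred_beam_approx: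
  "cmod ((\<integral>\<omega>. iexp (sqrt (real N) * Re (cnj u * centred_beam N \<delta> q p \<omega>)) \<partial>P)
      - complex_of_real (exp (- real N * (\<integral>\<omega>. (Re (cnj u * centred_beam N \<delta> q p \<omega>))\<^sup>2 \<partial>P) / 2)))
    \<le> real N * (\<bar>1 / sqrt (real N)\<bar> ^ 3 * (2 * cmod u) ^ 3 / 6
      + ((1 / sqrt (real N))\<^sup>2 * (2 * cmod u)\<^sup>2 / 2)\<^sup>2)"
proof -
  define w where "w n = cnj u * iexp (2 * pi * p / \<delta>) * steering N q n" for n
  define X where "X n \<omega> = Re (w n * centred_phasor p (m n \<omega>))" for n \<omega>
  define t where "t = 1 / sqrt (real N)"
  have "indep_vars (\<lambda>_. borel) (\<lambda>n \<omega>. Re (w n * centred_phasor p (m n \<omega>))) {..<N}"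
    using indep_vars_subset[OF indep_m subset_UNIV] by (rule indep_vars_compose2) simp
  then have indep: "indep_vars (\<lambda>_. borel) X {..<N}"
    by (simp add: X_def[abs_def])
  have bounded: "\<bar>X n \<omega>\<bar> \<le> 2 * cmod u" for n \<omega>
  proof -
    have "\<bar>X n \<omega>\<bar> \<le> cmod (w n) * cmod (centred_phasor p (m n \<omega>))"
      unfolding X_def norm_mult[symmetric] by (rule abs_Re_le_cmod)
    also have "\<dots> \<le> cmod u * 2"
      using norm_centred_phasor_le[of p "m n \<omega>"] by (simp add: w_def norm_mult mult_left_mono)
    finally show ?thesis
      by simp
  qed
  have centred: "expectation (X n) = 0" for n
    using integrable_centred_phasor_mult[of "\<lambda>_. 1" p n n]
    by (simp add: X_def[abs_def] integral_centred_phasor)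
  have Re_eq: "Re (cnj u * centred_beam N \<delta> q p \<omega>) = (\<Sum>n<N. X n \<omega>) / real N" for \<omega>
    unfolding X_def w_def by (rule Re_cnj_mult_centred_beam)
  have sum: "sqrt (real N) * Re (cnj u * centred_beam N \<delta> q p \<omega>) = t * (\<Sum>n<N. X n \<omega>)" for \<omega>
    unfolding Re_eq t_def by (cases "N = 0") (simp_all add: field_simps real_div_sqrt)
  have variance: "- real N * (\<integral>\<omega>. (Re (cnj u * centred_beam N \<delta> q p \<omega>))\<^sup>2 \<partial>P) / 2
      = - (t\<^sup>2 * (\<integral>\<omega>. (\<Sum>n<N. X n \<omega>)\<^sup>2 \<partial>P) / 2)"
    unfolding Re_eq t_def by (simp add: power_divide power2_eq_square)
  show ?thesis
    using char_indep_sum_approx[OF indep bounded centred, of t] unfolding sum variance t_def .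
qed

lemma tendsto_char_centred_beam:
  "((\<lambda>N. (\<integral>\<omega>. iexp (sqrt (real N)
          * (u1 * Re (centred_beam N \<delta> q p \<omega>) + u2 * Im (centred_beam N \<delta> q p \<omega>))) \<partial>P)
      - complex_of_real (exp (- real N
          * (\<integral>\<omega>. (u1 * Re (centred_beam N \<delta> q p \<omega>) + u2 * Im (centred_beam N \<delta> q p \<omega>))\<^sup>2 \<partial>P) / 2)))
    \<longlongrightarrow> 0) sequentially"
proof -
  have Re_cnj_Complex: "Re (cnj (Complex u1 u2) * z) = u1 * Re z + u2 * Im z" for z
    by simp
  have "((\<lambda>N. (\<integral>\<omega>. iexp (sqrt (real N) * Re (cnj (Complex u1 u2) * centred_beam N \<delta> q p \<omega>)) \<partial>P)
      - complex_of_real (exp (- real N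
          * (\<integral>\<omega>. (Re (cnj (Complex u1 u2) * centred_beam N \<delta> q p \<omega>))\<^sup>2 \<partial>P) / 2)))
    \<longlongrightarrow> 0) sequentially"
    by (rule Lim_null_comparison[OF _ tendsto_char_approx_bound[of "2 * cmod (Complex u1 u2)"]])
       (intro always_eventually allI char_centred_beam_approx)
  then show ?thesis
    unfolding Re_cnj_Complex .
qed

end

theorem theorem1:
  fixes P :: "'a measure" and m :: "nat \<Rightarrow> 'a \<Rightarrow> real" and \<delta> :: real
  assumes P: "prob_space P"
    and delta: "\<delta> > 0"
    and meas: "\<And>n. m n \<in> borel_measurable P"
    and indep: "prob_space.indep_vars P (\<lambda>_. borel) m UNIV"
    and ident: "\<And>n. distr P borel (m n) = distr P borel (m 0)"
    and symm: "distr P borel (\<lambda>\<omega>. - m 0 \<omega>) = distr P borel (m 0)"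
  shows
    "(\<forall>x. Im (Phi P m x) = 0) \<and>
     (\<forall>N q p. N \<ge> 1 \<longrightarrow>
        (let \<Phi> = (\<lambda>x. Re (Phi P m x));
             \<alpha> = 2 * pi * p / \<delta>;
             b1 = (\<lambda>\<omega>. Re (beam N \<delta> m q p \<omega>));
             b2 = (\<lambda>\<omega>. Im (beam N \<delta> m q p \<omega>));
             E1 = integral\<^sup>L P b1;
             E2 = integral\<^sup>L P b2;
             sr = sig_r2 \<Phi> N q p;
             si = sig_i2 \<Phi> N q p
         in E1 = 1 / real N * SaN N q * \<Phi> p * cos \<alpha> \<and>
            E2 = 1 / real N * SaN N q * \<Phi> p * sin \<alpha> \<and>
            integral\<^sup>L P (\<lambda>\<omega>. (b1 \<omega> - E1) * (b1 \<omega> - E1))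
               = sr * (cos \<alpha>)\<^sup>2 + si * (sin \<alpha>)\<^sup>2 \<and>
            integral\<^sup>L P (\<lambda>\<omega>. (b1 \<omega> - E1) * (b2 \<omega> - E2))
               = (sr - si) * sin \<alpha> * cos \<alpha> \<and>
            integral\<^sup>L P (\<lambda>\<omega>. (b2 \<omega> - E2) * (b1 \<omega> - E1))
               = (sr - si) * sin \<alpha> * cos \<alpha> \<and>
            integral\<^sup>L P (\<lambda>\<omega>. (b2 \<omega> - E2) * (b2 \<omega> - E2))
               = sr * (sin \<alpha>)\<^sup>2 + si * (cos \<alpha>)\<^sup>2)) \<and>
     (\<forall>q p u1 u2.
        ((\<lambda>N. let \<Phi> = (\<lambda>x. Re (Phi P m x));
                  \<alpha> = 2 * pi * p / \<delta>;
                  b1 = (\<lambda>\<omega>. Re (beam N \<delta> m q p \<omega>));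
                  b2 = (\<lambda>\<omega>. Im (beam N \<delta> m q p \<omega>));
                  E1 = integral\<^sup>L P b1;
                  E2 = integral\<^sup>L P b2;
                  sr = sig_r2 \<Phi> N q p;
                  si = sig_i2 \<Phi> N q p;
                  C11 = sr * (cos \<alpha>)\<^sup>2 + si * (sin \<alpha>)\<^sup>2;
                  C12 = (sr - si) * sin \<alpha> * cos \<alpha>;
                  C22 = sr * (sin \<alpha>)\<^sup>2 + si * (cos \<alpha>)\<^sup>2
              in integral\<^sup>L P (\<lambda>\<omega>. exp (\<i> * complex_of_real
                    (sqrt (real N) * (u1 * (b1 \<omega> - E1) + u2 * (b2 \<omega> - E2)))))
                 - complex_of_real (exp (- real N *
                    (u1\<^sup>2 * C11 + 2 * u1 * u2 * C12 + u2\<^sup>2 * C22) / 2)))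
         \<longlongrightarrow> 0) sequentially)"
proof -
  interpret rfda P m
    using P meas indep ident symm by (simp add: rfda_def rfda_axioms_def)
  have "Re (Phi P m x) = phi x" for x
    by (simp add: phi_def)
  then show ?thesis
    unfolding Let_def Re_centred_beam[symmetric] Im_centred_beam[symmetric]
    using Im_Phi integral_Re_beam integral_Im_beam covariance_centred_beam
      tendsto_char_centred_beam[unfolded variance_linear_combination_centred_beam]
    by simp
qed

end
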